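(* For any $n\in\mathbb{N}$, $(\mathcal{A}_n,L)$ is an automatic structure for $\mathrm{rps}_n$, where $L=\bigcup_{B\subseteq\mathcal{A}_n}L^B$, with $L^\emptyset=\{\varepsilon\}$, $L^B=L^{(a_1)}L^{(a_2)}\cdots L^{(a_k)}$ for $B=\{a_1<\cdots<a_k\}\neq\emptyset$, and $L^{(j)}=\{n\}^*\{n-1\}^*\cdots\{j+1\}^*\{j\}^+$ for $j\in\mathcal{A}_n$.
   Context: Let $\mathcal{A}_n=\{1<2<\cdots<n\}$. An rPS tableau is a finite (possibly empty) sequence of nonempty bottom-justified columns of boxes filled with positive integers, such that the entries of each column are weakly decreasing from top to bottom and the bottom entries of the columns form a strictly increasing sequence from left to right. Right insertion of a symbol $a$ into an rPS tableau $B$: if $a$ is strictly greater than every entry of the bottom row, append a new column consisting of $a$ at the right end; otherwise, let $z$ be the leftmost bottom-row entry with $z\geq a$ and put $a$ in a new box at the bottom of the column of $z$ (the previous entries of that column move up one box). For $w=w_1\cdots w_k$, $\mathfrak{R}_r(w)$ is obtained by starting with the empty tableau and right-inserting $w_1,\dots,w_k$ in order. The monoid $\mathrm{rps}_n$ is the quotient of $\mathcal{A}_n^*$ by the congruence $u\equiv v\iff\mathfrak{R}_r(u)=\mathfrak{R}_r(v)$; words are identified with the elements they represent. For an alphabet $\Sigma$ and a padding symbol $\$\notin\Sigma$, $\delta_R:\Sigma^*\times\Sigma^*\to((\Sigma\cup\{\$\})\times(\Sigma\cup\{\$\}))^*$ sends $(u_1\cdots u_m,v_1\cdots v_p)$ to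 the word of pairs $(u_i,v_i)$ obtained after padding the shorter word on the right with $\$$'s to equal length; $\delta_L$ is the same with padding on the left. For a monoid $M$ generated by finite $\Sigma$ and a regular language $L\subseteq\Sigma^*$ mapping onto $M$, define $L_a=\{(u,v)\in L\times L: ua=_M v\}$ and ${}_aL=\{(u,v)\in L\times L: au=_M v\}$. $(\Sigma,L)$ is an automatic structure for $M$ if $(L_a)\delta_R$ is a regular language for every $a\in\Sigma\cup\{\varepsilon\}$. *)

theory Defs
  imports Main
begin

definition regular_lang :: "'a set \<Rightarrow> 'a list set \<Rightarrow> bool" where
  "regular_lang Gamma L \<longleftrightarrow>
     (\<exists>(Q::nat set) (dl::nat \<Rightarrow> 'a \<Rightarrow> nat) q0 F.
        finite Q \<and> q0 \<in> Q \<and> F \<subseteq> Q \<and>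
        (\<forall>q\<in>Q. \<forall>a\<in>Gamma. dl q a \<in> Q) \<and>
        L = {w \<in> lists Gamma. foldl dl q0 w \<in> F})"

section \<open>Padded convolution delta_R (padding symbol \$ rendered as None)\<close>

definition padR :: "nat \<Rightarrow> 'a list \<Rightarrow> 'a option list" where
  "padR m u = map Some u @ replicate (m - length u) None"

definition deltaR :: "'a list \<Rightarrow> 'a list \<Rightarrow> ('a option \<times> 'a option) list" where
  "deltaR u v = (let m = max (length u) (length v) in zip (padR m u) (padR m v))"

text \<open>A monoid M generated by the finite set Sg is presented by the relation eqM on
  words over Sg (u =_M v). Generators a range over Sg together with the empty word.\<close>
definition L_right :: "('a list \<Rightarrow> 'a list \<Rightarrow> bool) \<Rightarrow> 'a list set \<Rightarrow> 'a list \<Rightarrow> ('a list \<times> 'a list) set" where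
  "L_right eqM L a = {(u, v). u \<in> L \<and> v \<in> L \<and> eqM (u @ a) v}"

definition automatic_structure ::
  "'a set \<Rightarrow> ('a list \<Rightarrow> 'a list \<Rightarrow> bool) \<Rightarrow> 'a list set \<Rightarrow> bool" where
  "automatic_structure Sg eqM L \<longleftrightarrow>
     finite Sg \<and> L \<subseteq> lists Sg \<and> regular_lang Sg L \<and>
     (\<forall>w \<in> lists Sg. \<exists>u \<in> L. eqM u w) \<and>
     (\<forall>a \<in> insert [] ((\<lambda>x. [x]) ` Sg).
        regular_lang (insert None (Some ` Sg) \<times> insert None (Some ` Sg))
          ((\<lambda>(u, v). deltaR u v) ` L_right eqM L a))"

text \<open>An rPS tableau is a list of columns (left to right); each column is a nonempty list
  written from the bottom entry upwards (so the head is the bottom-row entry).\<close>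
type_synonym rps_tableau = "nat list list"

fun rins :: "rps_tableau \<Rightarrow> nat \<Rightarrow> rps_tableau" where
  "rins [] a = [[a]]"
| "rins (c # cs) a = (if a \<le> hd c then (a # c) # cs else c # rins cs a)"

definition rR :: "nat list \<Rightarrow> rps_tableau" where
  "rR w = foldl rins [] w"

definition rps_eq :: "nat list \<Rightarrow> nat list \<Rightarrow> bool" where
  "rps_eq u v \<longleftrightarrow> rR u = rR v"

abbreviation alphA :: "nat \<Rightarrow> nat set" where
  "alphA n \<equiv> {1..n}"

definition Lcol :: "nat \<Rightarrow> nat \<Rightarrow> nat list set" where
  "Lcol n j = {concat (map (\<lambda>i. replicate (e i) i) (rev [j..<Suc n])) | e. e j \<ge> 1}"

fun concL :: "'a list set list \<Rightarrow> 'a list set" where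
  "concL [] = {[]}"
| "concL (A # As) = {u @ v | u v. u \<in> A \<and> v \<in> concL As}"

definition LB :: "nat \<Rightarrow> nat set \<Rightarrow> nat list set" where
  "LB n B = concL (map (Lcol n) (sorted_list_of_set B))"

definition Lrps :: "nat \<Rightarrow> nat list set" where
  "Lrps n = (\<Union>B \<in> Pow (alphA n). LB n B)"

end

theory Submission
  imports Defs
begin

text \<open>Read each column of an rPS tableau from top to bottom and concatenate the columns from
  left to right. The words of \<open>L\<close> are exactly these readings, and right-inserting a reading letter
  by letter rebuilds its tableau, so \<open>L\<close> contains exactly one representative of every element.
  Right multiplication by a generator \<open>a\<close> becomes insertion of \<open>a\<close> into the reading, just after
  the first column whose bottom entry is at least \<open>a\<close>. Membership in \<open>L\<close> is decided by a scanner
  remembering only the bottom entry of the last completed column and the last letter read.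
  Running it on the first tape, while checking that the second tape agrees up to the insertion
  point and lags one letter behind afterwards, recognises the padded pairs \<open>(u, ua)\<close>.\<close>

lemma regular_langI:
  fixes d :: "'s \<Rightarrow> 'a \<Rightarrow> 's"
  assumes fin: "finite S" and init: "start \<in> S" and closed: "\<And>s x. s \<in> S \<Longrightarrow> x \<in> G \<Longrightarrow> d s x \<in> S"
    and L: "L = {w \<in> lists G. acc (foldl d start w)}"
  shows "regular_lang G L"
proof -
  obtain m and g :: "nat \<Rightarrow> 's" where S: "S = g ` {..<m}"
    using finite_imp_nat_seg_image_inj_on[OF fin] lessThan_def by metis
  define f where "f = inv_into {..<m} g"
  have gf: "g (f s) = s" if "s \<in> S" for s using that S f_def by (simp add: f_inv_into_f)
  have f_inj: "inj_on f S" by (metis gf inj_onI)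
  define dl where "dl q x = f (d (g q) x)" for q x
  have run: "foldl dl (f s) w = f (foldl d s w) \<and> foldl d s w \<in> S"
    if "s \<in> S" "w \<in> lists G" for s w
    using that by (induction w arbitrary: s) (simp_all add: dl_def gf closed)
  have "w \<in> L \<longleftrightarrow> w \<in> lists G \<and> foldl dl (f start) w \<in> f ` {s \<in> S. acc s}" for w
  proof (cases "w \<in> lists G")
    case True
    then show ?thesis using run[OF init True] L f_inj by (auto dest: inj_onD)
  qed (use L in simp)
  moreover have "\<forall>q\<in>f ` S. \<forall>x\<in>G. dl q x \<in> f ` S"
    using closed by (simp add: dl_def gf)
  ultimately show ?thesis unfolding regular_lang_def
    using fin init by (intro exI[of _ "f ` S"] exI[of _ dl] exI[of _ "f start"] exI[of _ "f ` {s \<in> S. acc s}"]) auto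
qed

lemma deltaR_simps [simp]:
  "deltaR [] [] = []"
  "deltaR (x # xs) (y # ys) = (Some x, Some y) # deltaR xs ys"
  "deltaR [] (y # ys) = (None, Some y) # deltaR [] ys"
  "deltaR (x # xs) [] = (Some x, None) # deltaR xs []"
  by (simp_all add: deltaR_def padR_def Let_def max_def)

lemma Some_in_image_Some [simp]: "Some a \<in> Some ` S \<longleftrightarrow> a \<in> S"
  by auto

lemma deltaR_in_lists:
  "deltaR u v \<in> lists (insert None (Some ` S) \<times> insert None (Some ` S)) \<longleftrightarrow> u \<in> lists S \<and> v \<in> lists S"
proof -
  have padded: "deltaR w [] \<in> lists (insert None (Some ` S) \<times> insert None (Some ` S)) \<longleftrightarrow> w \<in> lists S"
    "deltaR [] w \<in> lists (insert None (Some ` S) \<times> insert None (Some ` S)) \<longleftrightarrow> w \<in> lists S" for w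
    by (induction w) simp_all
  show ?thesis
    by (induction u v rule: list_induct2') (simp_all add: padded[simplified] conj_ac)
qed

lemma deltaR_eq_Nil_iff [simp]:
  "deltaR u v = [] \<longleftrightarrow> u = [] \<and> v = []"
  "[] = deltaR u v \<longleftrightarrow> u = [] \<and> v = []"
  by (cases u; cases v; simp)+

fun diag_step :: "('q \<Rightarrow> 'a \<Rightarrow> 'q) \<Rightarrow> 'q option \<Rightarrow> 'a option \<times> 'a option \<Rightarrow> 'q option" where
  "diag_step dl (Some q) (Some x, Some y) = (if x = y then Some (dl q x) else None)"
| "diag_step dl _ _ = None"

lemma foldl_diag_step_None [simp]: "foldl (diag_step dl) None w = None"
  by (induction w) auto

lemma foldl_diag_step:
  "foldl (diag_step dl) (Some q) w \<in> Some ` F \<longleftrightarrow> (\<exists>u. w = deltaR u u \<and> foldl dl q u \<in> F)"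
proof (induction w arbitrary: q)
  case Nil
  then show ?case by (metis deltaR_eq_Nil_iff Some_in_image_Some foldl_Nil)
next
  case (Cons z w)
  have "z # w = deltaR u u \<longleftrightarrow> (\<exists>x u'. u = x # u' \<and> z = (Some x, Some x) \<and> w = deltaR u' u')" for u
    by (cases u) auto
  moreover obtain p r where "z = (p, r)" by (cases z)
  ultimately show ?case using Cons.IH
    by (cases p; cases r) auto
qed

lemma regular_lang_deltaR_diag:
  assumes "regular_lang Sg L"
  shows "regular_lang (insert None (Some ` Sg) \<times> insert None (Some ` Sg)) ((\<lambda>u. deltaR u u) ` L)"
proof -
  obtain Q and dl :: "nat \<Rightarrow> 'a \<Rightarrow> nat" and q0 F
    where Q: "finite Q" "q0 \<in> Q" "\<forall>q\<in>Q. \<forall>a\<in>Sg. dl q a \<in> Q"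
      and L: "L = {w \<in> lists Sg. foldl dl q0 w \<in> F}"
    using assms unfolding regular_lang_def by auto
  show ?thesis
  proof (rule regular_langI[where S = "insert None (Some ` Q)" and d = "diag_step dl" and start = "Some q0"
        and acc = "\<lambda>s. s \<in> Some ` F"])
    show "finite (insert None (Some ` Q))" "Some q0 \<in> insert None (Some ` Q)" using Q by auto
    show "diag_step dl s z \<in> insert None (Some ` Q)"
      if "s \<in> insert None (Some ` Q)" "z \<in> insert None (Some ` Sg) \<times> insert None (Some ` Sg)" for s z
      using that Q(3) by (cases "(dl, s, z)" rule: diag_step.cases) auto
    show "(\<lambda>u. deltaR u u) ` L = {w \<in> lists (insert None (Some ` Sg) \<times> insert None (Some ` Sg)).
        foldl (diag_step dl) (Some q0) w \<in> Some ` F}"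
      unfolding L foldl_diag_step using deltaR_in_lists[of _ _ Sg] by blast
  qed
qed

section \<open>Column readings of rPS tableaux\<close>

fun valid_tableau :: "nat \<Rightarrow> rps_tableau \<Rightarrow> bool" where
  "valid_tableau lo [] \<longleftrightarrow> True"
| "valid_tableau lo (c # cs) \<longleftrightarrow> c \<noteq> [] \<and> sorted c \<and> lo < hd c \<and> valid_tableau (hd c) cs"

definition reading :: "rps_tableau \<Rightarrow> nat list" where
  "reading T = concat (map rev T)"

definition is_reading :: "nat \<Rightarrow> nat list \<Rightarrow> bool" where
  "is_reading lo u \<longleftrightarrow> (\<exists>T. valid_tableau lo T \<and> u = reading T)"

lemma reading_simps [simp]: "reading [] = []" "reading (c # cs) = rev c @ reading cs"
  by (simp_all add: reading_def)

lemma set_reading: "set (reading T) = set (concat T)"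
  by (induction T) auto

lemma valid_tableau_mono: "valid_tableau lo T \<Longrightarrow> lo' \<le> lo \<Longrightarrow> valid_tableau lo' T"
  by (cases T) auto

lemma valid_tableau_entries_gt: "valid_tableau lo T \<Longrightarrow> x \<in> set (concat T) \<Longrightarrow> lo < x"
proof (induction lo T rule: valid_tableau.induct)
  case (2 lo c cs)
  have le: "hd c \<le> y" if "y \<in> set c" for y
    using that 2(2) by (cases c) auto
  from 2(3) show ?case
    using 2 le by (auto intro: less_le_trans less_trans)
qed simp

lemma is_reading_Nil [simp]: "is_reading lo []"
  unfolding is_reading_def by (auto intro: exI[of _ "[]"])

lemma is_reading_hd: "is_reading lo (x # xs) \<Longrightarrow> lo < x"
  unfolding is_reading_def using valid_tableau_entries_gt set_reading
  by (metis list.set_intros(1))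

lemma is_reading_Cons:
  "is_reading lo (x # xs) \<longleftrightarrow>
     (\<exists>r rest. xs = r @ rest \<and> sorted_wrt (\<ge>) (x # r) \<and> lo < last (x # r) \<and> is_reading (last (x # r)) rest)"
proof
  assume "is_reading lo (x # xs)"
  then obtain T where T: "valid_tableau lo T" "x # xs = reading T"
    unfolding is_reading_def by blast
  then obtain c cs where c: "T = c # cs" "c \<noteq> []"
    by (cases T) auto
  then obtain r where r: "rev c = x # r"
    using T by (cases "rev c") auto
  have "last (x # r) = hd c"
    using r by (metis hd_rev rev_rev_ident)
  moreover have "sorted_wrt (\<ge>) (x # r)"
    using T c r by (metis sorted_wrt_rev rev_rev_ident valid_tableau.simps(2))
  moreover have "xs = r @ reading cs"
    using T c r by simp
  moreover have "lo < hd c" "is_reading (hd c) (reading cs)"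
    using T c unfolding is_reading_def by auto
  ultimately show "\<exists>r rest. xs = r @ rest \<and> sorted_wrt (\<ge>) (x # r) \<and> lo < last (x # r) \<and> is_reading (last (x # r)) rest"
    by metis
next
  assume "\<exists>r rest. xs = r @ rest \<and> sorted_wrt (\<ge>) (x # r) \<and> lo < last (x # r) \<and> is_reading (last (x # r)) rest"
  then obtain r T where r: "xs = r @ reading T" "sorted_wrt (\<ge>) (x # r)" "lo < last (x # r)"
    and T: "valid_tableau (last (x # r)) T"
    unfolding is_reading_def by blast
  have "sorted (rev (x # r))"
    using r(2) by (simp only: sorted_wrt_rev)
  then have "valid_tableau lo (rev (x # r) # T)"
    using r T by (simp only: valid_tableau.simps hd_rev) simp
  moreover have "x # xs = reading (rev (x # r) # T)"
    using r by simp
  ultimately show "is_reading lo (x # xs)"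
    unfolding is_reading_def by blast
qed

lemma is_reading_singleton: "is_reading lo [c] \<longleftrightarrow> lo < c"
proof
  show "is_reading lo [c] \<Longrightarrow> lo < c"
    by (rule is_reading_hd)
  show "lo < c \<Longrightarrow> is_reading lo [c]"
    unfolding is_reading_Cons[of lo c] by (intro exI[of _ "[]"]) simp
qed

lemma is_reading_Cons_Cons_le:
  assumes "x \<le> c"
  shows "is_reading lo (c # x # xs) \<longleftrightarrow> is_reading lo (x # xs)"
proof -
  have "is_reading lo (c # x # xs) \<longleftrightarrow>
      (\<exists>r rest. x # xs = r @ rest \<and> sorted_wrt (\<ge>) (c # r) \<and> lo < last (c # r) \<and> is_reading (last (c # r)) rest)"
    by (rule is_reading_Cons)
  also have "\<dots> \<longleftrightarrow>
      (\<exists>r rest. xs = r @ rest \<and> sorted_wrt (\<ge>) (x # r) \<and> lo < last (x # r) \<and> is_reading (last (x # r)) rest)"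
  proof
    assume "\<exists>r rest. x # xs = r @ rest \<and> sorted_wrt (\<ge>) (c # r) \<and> lo < last (c # r) \<and> is_reading (last (c # r)) rest"
    then obtain r rest where r: "x # xs = r @ rest" "sorted_wrt (\<ge>) (c # r)" "lo < last (c # r)"
      "is_reading (last (c # r)) rest"
      by blast
    \<comment> \<open>the first column cannot end at \<open>c\<close>, since the next column would have to start above \<open>c\<close>\<close>
    have "r \<noteq> []"
    proof
      assume "r = []"
      then have "is_reading c (x # xs)"
        using r(1,4) by simp
      then have "c < x"
        by (rule is_reading_hd)
      with assms show False by simp
    qed
    then obtain r' where r': "r = x # r'" "xs = r' @ rest"
      using r(1) by (cases r) auto
    then show "\<exists>r rest. xs = r @ rest \<and> sorted_wrt (\<ge>) (x # r) \<and> lo < last (x # r) \<and> is_reading (last (x # r)) rest"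
      using r by (intro exI[of _ r'] exI[of _ rest]) simp
  next
    assume "\<exists>r rest. xs = r @ rest \<and> sorted_wrt (\<ge>) (x # r) \<and> lo < last (x # r) \<and> is_reading (last (x # r)) rest"
    then obtain r rest where "xs = r @ rest" "sorted_wrt (\<ge>) (x # r)" "lo < last (x # r)" "is_reading (last (x # r)) rest"
      by blast
    then show "\<exists>r rest. x # xs = r @ rest \<and> sorted_wrt (\<ge>) (c # r) \<and> lo < last (c # r) \<and> is_reading (last (c # r)) rest"
      using assms by (intro exI[of _ "x # r"] exI[of _ rest]) (auto intro: order_trans)
  qed
  also have "\<dots> \<longleftrightarrow> is_reading lo (x # xs)"
    by (rule is_reading_Cons[symmetric])
  finally show ?thesis .
qed

lemma is_reading_Cons_Cons_gt:
  assumes "c < x"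
  shows "is_reading lo (c # x # xs) \<longleftrightarrow> lo < c \<and> is_reading c (x # xs)"
proof -
  have r_Nil: "r = []" if "x # xs = r @ rest" "sorted_wrt (\<ge>) (c # r)" for r rest
    using that assms by (cases r) auto
  show ?thesis
    unfolding is_reading_Cons[of lo c]
  proof
    assume "\<exists>r rest. x # xs = r @ rest \<and> sorted_wrt (\<ge>) (c # r) \<and> lo < last (c # r) \<and> is_reading (last (c # r)) rest"
    then obtain r rest where "x # xs = r @ rest" "sorted_wrt (\<ge>) (c # r)" "lo < last (c # r)" "is_reading (last (c # r)) rest"
      by blast
    then show "lo < c \<and> is_reading c (x # xs)"
      using r_Nil by force
  qed (rule exI[of _ "[]"], simp)
qed

section \<open>The language L as the set of readings\<close>

lemma sorted_concat_replicate:
  "sorted_wrt (<) ks \<Longrightarrow> sorted (concat (map (\<lambda>i. replicate (e i) i) ks))"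
  by (induction ks) (auto simp: sorted_append)

lemma sorted_eq_filter_less_append_replicate:
  "sorted c \<Longrightarrow> \<forall>x\<in>set c. x \<le> m \<Longrightarrow> c = filter (\<lambda>x. x < m) c @ replicate (count_list c m) m"
proof (induction c)
  case (Cons x c)
  show ?case
  proof (cases "x = m")
    case True
    then have "\<forall>y\<in>set c. y = m"
      using Cons.prems by force
    then show ?thesis
      using True by (induction c) auto
  next
    case False
    then show ?thesis
      using Cons by auto
  qed
qed simp

lemma sorted_eq_concat_replicate_count:
  "sorted c \<Longrightarrow> set c \<subseteq> {j..<m} \<Longrightarrow> c = concat (map (\<lambda>i. replicate (count_list c i) i) [j..<m])"
proof (induction m arbitrary: c)
  case (Suc m)
  show ?case
  proof (cases "j \<le> m")
    case False
    then show ?thesis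
      using Suc.prems by auto
  next
    case True
    define c' where "c' = filter (\<lambda>x. x < m) c"
    have c: "c = c' @ replicate (count_list c m) m"
      using sorted_eq_filter_less_append_replicate[of c m] Suc.prems unfolding c'_def by force
    have "sorted c'" "set c' \<subseteq> {j..<m}"
      using Suc.prems unfolding c'_def by (auto simp: sorted_wrt_filter)
    then have "c' = concat (map (\<lambda>i. replicate (count_list c' i) i) [j..<m])"
      using Suc.IH by blast
    also have "\<dots> = concat (map (\<lambda>i. replicate (count_list c i) i) [j..<m])"
      by (subst c, rule arg_cong[where f = concat], rule map_cong) (auto simp: count_list_0_iff)
    finally show ?thesis
      using c True by simp
  qed
qed simp

lemma mem_Lcol_iff:
  assumes "j \<le> n"
  shows "w \<in> Lcol n j \<longleftrightarrow> (\<exists>c. w = rev c \<and> c \<noteq> [] \<and> sorted c \<and> hd c = j \<and> set c \<subseteq> {..n})"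
proof -
  have Lcol: "Lcol n j = {rev (concat (map (\<lambda>i. replicate (e i) i) [j..<Suc n])) | e. 1 \<le> e j}"
    unfolding Lcol_def by (simp add: rev_concat rev_map o_def)
  show ?thesis
  proof
    assume "w \<in> Lcol n j"
    then obtain e where e: "1 \<le> e j" "w = rev (concat (map (\<lambda>i. replicate (e i) i) [j..<Suc n]))"
      unfolding Lcol by blast
    define c where "c = concat (map (\<lambda>i. replicate (e i) i) [j..<Suc n])"
    have "[j..<Suc n] = j # [Suc j..<Suc n]"
      using assms upt_conv_Cons by auto
    then have "c = replicate (e j) j @ concat (map (\<lambda>i. replicate (e i) i) [Suc j..<Suc n])"
      unfolding c_def by simp
    then have "c \<noteq> [] \<and> hd c = j"
      using e(1) by (cases "e j") auto
    moreover have "sorted c"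
      unfolding c_def by (rule sorted_concat_replicate) (rule sorted_wrt_upt)
    moreover have "set c \<subseteq> {..n}"
      unfolding c_def by auto
    ultimately show "\<exists>c. w = rev c \<and> c \<noteq> [] \<and> sorted c \<and> hd c = j \<and> set c \<subseteq> {..n}"
      using e(2) unfolding c_def[symmetric] by blast
  next
    assume "\<exists>c. w = rev c \<and> c \<noteq> [] \<and> sorted c \<and> hd c = j \<and> set c \<subseteq> {..n}"
    then obtain c where c: "w = rev c" "c \<noteq> []" "sorted c" "hd c = j" "set c \<subseteq> {..n}"
      by blast
    have "j \<le> x" if "x \<in> set c" for x
      using that c(2-4) by (cases c) auto
    then have "set c \<subseteq> {j..<Suc n}"
      using c(5) by auto
    then have "c = concat (map (\<lambda>i. replicate (count_list c i) i) [j..<Suc n])"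
      using sorted_eq_concat_replicate_count c(3) by blast
    moreover have "1 \<le> count_list c j"
      using c(2,4) count_list_0_iff[of c j] by (cases c) auto
    ultimately show "w \<in> Lcol n j"
      unfolding Lcol using c(1) by (intro CollectI exI[of _ "count_list c"]) simp
  qed
qed

lemma concL_Lcol:
  "sorted_wrt (<) js \<Longrightarrow> \<forall>j\<in>set js. lo < j \<and> j \<le> n \<Longrightarrow>
    concL (map (Lcol n) js) = reading ` {T. valid_tableau lo T \<and> map hd T = js \<and> set (concat T) \<subseteq> {..n}}"
proof (induction js arbitrary: lo)
  case Nil
  have "{T. valid_tableau lo T \<and> map hd T = [] \<and> set (concat T) \<subseteq> {..n}} = {[]}"
    by auto
  then show ?case by simp
next
  case (Cons j js)
  have IH: "concL (map (Lcol n) js) = reading ` {T. valid_tableau j T \<and> map hd T = js \<and> set (concat T) \<subseteq> {..n}}"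
    using Cons by auto
  have j: "j \<le> n" "lo < j"
    using Cons.prems by auto
  show ?case
  proof
    show "concL (map (Lcol n) (j # js)) \<subseteq> reading ` {T. valid_tableau lo T \<and> map hd T = j # js \<and> set (concat T) \<subseteq> {..n}}"
    proof
      fix w
      assume "w \<in> concL (map (Lcol n) (j # js))"
      then obtain u v where uv: "w = u @ v" "u \<in> Lcol n j" "v \<in> concL (map (Lcol n) js)"
        by auto
      obtain c where c: "u = rev c" "c \<noteq> []" "sorted c" "hd c = j" "set c \<subseteq> {..n}"
        using uv(2) mem_Lcol_iff[OF j(1)] by blast
      obtain T where T: "v = reading T" "valid_tableau j T" "map hd T = js" "set (concat T) \<subseteq> {..n}"
        using uv(3) unfolding IH by blast
      show "w \<in> reading ` {T. valid_tableau lo T \<and> map hd T = j # js \<and> set (concat T) \<subseteq> {..n}}"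
        using uv(1) c T j by (intro image_eqI[of _ _ "c # T"]) auto
    qed
  next
    show "reading ` {T. valid_tableau lo T \<and> map hd T = j # js \<and> set (concat T) \<subseteq> {..n}} \<subseteq> concL (map (Lcol n) (j # js))"
    proof
      fix w
      assume "w \<in> reading ` {T. valid_tableau lo T \<and> map hd T = j # js \<and> set (concat T) \<subseteq> {..n}}"
      then obtain c T where cT: "w = reading (c # T)" "valid_tableau lo (c # T)" "map hd (c # T) = j # js"
        "set (concat (c # T)) \<subseteq> {..n}"
        by (auto simp: Cons_eq_map_conv)
      have "rev c \<in> Lcol n j"
        using cT mem_Lcol_iff[OF j(1)] by auto
      moreover have "reading T \<in> concL (map (Lcol n) js)"
        unfolding IH using cT by auto
      ultimately show "w \<in> concL (map (Lcol n) (j # js))"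
        using cT(1) by auto
    qed
  qed
qed

lemma valid_tableau_heads:
  "valid_tableau lo T \<Longrightarrow> sorted_wrt (<) (map hd T) \<and> (\<forall>h\<in>set (map hd T). lo < h)"
  by (induction lo T rule: valid_tableau.induct) auto

lemma valid_tableau_columns_nonempty: "valid_tableau lo T \<Longrightarrow> [] \<notin> set T"
  by (induction lo T rule: valid_tableau.induct) auto

lemma LB_eq_readings:
  assumes "B \<subseteq> {1..n}"
  shows "LB n B = reading ` {T. valid_tableau 0 T \<and> map hd T = sorted_list_of_set B \<and> set (concat T) \<subseteq> {..n}}"
proof -
  have "\<forall>j\<in>set (sorted_list_of_set B). 0 < j \<and> j \<le> n"
    using assms finite_subset[OF assms] by auto
  then show ?thesis
    unfolding LB_def by (rule concL_Lcol[OF strict_sorted_list_of_set])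
qed

lemma Lrps_eq_readings: "Lrps n = reading ` {T. valid_tableau 0 T \<and> set (concat T) \<subseteq> {..n}}"
proof
  show "Lrps n \<subseteq> reading ` {T. valid_tableau 0 T \<and> set (concat T) \<subseteq> {..n}}"
    unfolding Lrps_def using LB_eq_readings by fastforce
next
  show "reading ` {T. valid_tableau 0 T \<and> set (concat T) \<subseteq> {..n}} \<subseteq> Lrps n"
  proof
    fix u
    assume "u \<in> reading ` {T. valid_tableau 0 T \<and> set (concat T) \<subseteq> {..n}}"
    then obtain T where T: "u = reading T" "valid_tableau 0 T" "set (concat T) \<subseteq> {..n}"
      by blast
    define B where "B = set (map hd T)"
    have heads: "sorted_wrt (<) (map hd T)" "\<forall>h\<in>B. 0 < h"
      using valid_tableau_heads[OF T(2)] unfolding B_def by auto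
    have "hd c \<in> set (concat T)" if "c \<in> set T" for c
      using that valid_tableau_columns_nonempty[OF T(2)] by (metis UN_I hd_in_set set_concat)
    then have B_sub: "B \<subseteq> {1..n}"
      using heads(2) T(3) unfolding B_def by fastforce
    have "sorted_list_of_set B = map hd T"
      unfolding B_def sorted_list_of_set_sort_remdups using heads(1)
      by (simp add: strict_sorted_iff distinct_remdups_id sorted_sort_id)
    then have "u \<in> LB n B"
      unfolding LB_eq_readings[OF B_sub] using T by (intro image_eqI[of _ _ T]) simp_all
    then show "u \<in> Lrps n"
      unfolding Lrps_def using B_sub by blast
  qed
qed

lemma Lrps_eq: "Lrps n = {u. set u \<subseteq> {1..n} \<and> is_reading 0 u}"
proof -
  have "set (reading T) \<subseteq> {1..n} \<longleftrightarrow> set (concat T) \<subseteq> {..n}" if "valid_tableau 0 T" for T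
    using valid_tableau_entries_gt[OF that] unfolding set_reading by fastforce
  then show ?thesis
    unfolding Lrps_eq_readings is_reading_def by blast
qed

section \<open>Right insertion on readings\<close>

lemma rins_new_column: "\<forall>c\<in>set T. hd c < x \<Longrightarrow> rins T x = T @ [[x]]"
  by (induction T) auto

lemma rins_last_column: "\<forall>c\<in>set T. hd c < x \<Longrightarrow> x \<le> hd col \<Longrightarrow> rins (T @ [col]) x = T @ [x # col]"
  by (induction T) auto

lemma foldl_rins_column:
  "c \<noteq> [] \<Longrightarrow> sorted c \<Longrightarrow> \<forall>c'\<in>set T. hd c' < hd c \<Longrightarrow> foldl rins T (rev c) = T @ [c]"
proof (induction c)
  case (Cons h t)
  show ?case
  proof (cases t)
    case Nil
    then show ?thesis
      using Cons.prems rins_new_column[of T h] by simp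
  next
    case (Cons y t')
    then have "h \<le> hd t"
      using Cons.prems by simp
    moreover have "foldl rins T (rev t) = T @ [t]"
      using Cons.IH Cons.prems \<open>t = y # t'\<close> calculation by force
    ultimately show ?thesis
      using rins_last_column[of T h t] Cons.prems by simp
  qed
qed simp

lemma foldl_rins_reading:
  "valid_tableau lo T \<Longrightarrow> \<forall>c\<in>set T0. hd c \<le> lo \<Longrightarrow> foldl rins T0 (reading T) = T0 @ T"
proof (induction lo T arbitrary: T0 rule: valid_tableau.induct)
  case (2 lo c cs)
  then have "foldl rins T0 (rev c) = T0 @ [c]"
    using foldl_rins_column by force
  moreover have "\<forall>c'\<in>set (T0 @ [c]). hd c' \<le> hd c"
    using 2 by force
  ultimately show ?case
    using 2 by simp
qed simp

lemma rR_reading: "valid_tableau 0 T \<Longrightarrow> rR (reading T) = T"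
  unfolding rR_def using foldl_rins_reading[of 0 T "[]"] by simp

lemma is_reading_rR_inj: "is_reading 0 u \<Longrightarrow> is_reading 0 v \<Longrightarrow> rR u = rR v \<Longrightarrow> u = v"
  unfolding is_reading_def using rR_reading by auto

text \<open>In \<open>insert_after a c u\<close>, \<open>c\<close> is the letter read just before \<open>u\<close>. An ascent \<open>c < x\<close>
  marks the end of a column with bottom \<open>c\<close>, so \<open>a\<close> goes in front of \<open>x\<close> exactly when \<open>a \<le> c\<close>.\<close>

fun insert_after :: "nat \<Rightarrow> nat \<Rightarrow> nat list \<Rightarrow> nat list" where
  "insert_after a c [] = [a]"
| "insert_after a c (x # xs) = (if c < x \<and> a \<le> c then a # x # xs else x # insert_after a x xs)"

fun insert_reading :: "nat \<Rightarrow> nat list \<Rightarrow> nat list" where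
  "insert_reading a [] = [a]"
| "insert_reading a (x # xs) = x # insert_after a x xs"

lemma insert_reading_ne_Nil [simp]: "insert_reading a u \<noteq> []"
  by (cases u) simp_all

lemma set_insert_reading: "set (insert_reading a u) = insert a (set u)"
proof -
  have "set (insert_after a c v) = insert a (set v)" for c v
    by (induction a c v rule: insert_after.induct) auto
  then show ?thesis
    by (cases u) auto
qed

lemma insert_after_column:
  "sorted_wrt (\<ge>) (p # r) \<Longrightarrow> rest = [] \<or> last (p # r) < hd rest \<Longrightarrow>
    insert_after a p (r @ rest) = r @ (if a \<le> last (p # r) then a # rest else insert_reading a rest)"
proof (induction r arbitrary: p)
  case Nil
  then show ?case by (cases rest) auto
next
  case (Cons y r)
  then have "insert_after a p ((y # r) @ rest) = y # insert_after a y (r @ rest)"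
    by auto
  with Cons show ?case by simp
qed

lemma reading_rins: "valid_tableau lo T \<Longrightarrow> reading (rins T a) = insert_reading a (reading T)"
proof (induction lo T rule: valid_tableau.induct)
  case (2 lo c cs)
  then obtain x r where xr: "rev c = x # r"
    by (cases "rev c") auto
  have sorted: "sorted_wrt (\<ge>) (x # r)"
    using 2 xr by (metis sorted_wrt_rev rev_rev_ident valid_tableau.simps(2))
  have bottom: "last (x # r) = hd c"
    using xr by (metis hd_rev rev_rev_ident)
  have "is_reading (hd c) (reading cs)"
    using 2 unfolding is_reading_def by auto
  then have "reading cs = [] \<or> hd c < hd (reading cs)"
    by (cases "reading cs") (auto dest: is_reading_hd)
  then have "insert_reading a (reading (c # cs)) = x # r @ (if a \<le> hd c then a # reading cs else insert_reading a (reading cs))"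
    using insert_after_column[OF sorted, of "reading cs" a] xr bottom by simp
  then show ?case
    using 2 xr by auto
qed simp

lemma valid_tableau_rins: "valid_tableau lo T \<Longrightarrow> lo < a \<Longrightarrow> valid_tableau lo (rins T a)"
proof (induction lo T rule: valid_tableau.induct)
  case (2 lo c cs)
  show ?case
  proof (cases "a \<le> hd c")
    case True
    then have "sorted (a # c)"
      using 2 by (cases c) auto
    moreover have "valid_tableau a cs"
      using 2 True valid_tableau_mono by auto
    ultimately show ?thesis
      using True 2 by simp
  qed (use 2 in simp)
qed simp

lemma rR_insert_reading:
  assumes "is_reading 0 u" "0 < a"
  shows "is_reading 0 (insert_reading a u)" "rR (insert_reading a u) = rR (u @ [a])"
proof -
  obtain T where T: "valid_tableau 0 T" "u = reading T"
    using assms(1) unfolding is_reading_def by blast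
  have valid: "valid_tableau 0 (rins T a)"
    using valid_tableau_rins[OF T(1) assms(2)] .
  have ins: "insert_reading a u = reading (rins T a)"
    using reading_rins[OF T(1)] T(2) by simp
  then show "is_reading 0 (insert_reading a u)"
    using valid unfolding is_reading_def by blast
  have "rR (u @ [a]) = rins T a"
    using rR_reading[OF T(1)] T(2) by (simp add: rR_def)
  then show "rR (insert_reading a u) = rR (u @ [a])"
    using ins rR_reading[OF valid] by simp
qed

lemma ex_reading_rR_eq: "w \<in> lists {1..n} \<Longrightarrow> \<exists>u. set u \<subseteq> {1..n} \<and> is_reading 0 u \<and> rR u = rR w"
proof (induction w rule: rev_induct)
  case (snoc a w)
  then obtain u where u: "set u \<subseteq> {1..n}" "is_reading 0 u" "rR u = rR w"
    by auto
  have a: "a \<in> {1..n}"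
    using snoc.prems by simp
  then have "is_reading 0 (insert_reading a u)" "rR (insert_reading a u) = rR (w @ [a])"
    using rR_insert_reading[OF u(2)] u(3) by (auto simp: rR_def)
  moreover have "set (insert_reading a u) \<subseteq> {1..n}"
    using u(1) a by (simp add: set_insert_reading)
  ultimately show ?case
    by blast
qed (intro exI[of _ "[]"], simp)

lemma L_right_Nil: "L_right rps_eq (Lrps n) [] = {(u, u) | u. u \<in> Lrps n}"
  unfolding L_right_def rps_eq_def Lrps_eq using is_reading_rR_inj by auto

lemma L_right_letter:
  assumes "a \<in> {1..n}"
  shows "L_right rps_eq (Lrps n) [a] = {(u, insert_reading a u) | u. u \<in> Lrps n}"
proof -
  have "v = insert_reading a u \<longleftrightarrow> is_reading 0 v \<and> rR (u @ [a]) = rR v" if "is_reading 0 u" for u v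
    using rR_insert_reading[OF that] assms is_reading_rR_inj by auto
  moreover have "set (insert_reading a u) \<subseteq> {1..n} \<longleftrightarrow> set u \<subseteq> {1..n}" for u
    using assms by (auto simp: set_insert_reading)
  ultimately show ?thesis
    unfolding L_right_def rps_eq_def Lrps_eq by auto
qed

section \<open>Automata for L and its multiplier languages\<close>

text \<open>The state \<open>Scan b c\<close> records the bottom \<open>b\<close> of the last completed column and the last letter \<open>c\<close>.\<close>

datatype scan_state = Scan_Dead | Scan_Start | Scan nat nat

fun scan_step :: "scan_state \<Rightarrow> nat \<Rightarrow> scan_state" where
  "scan_step Scan_Start x = Scan 0 x"
| "scan_step (Scan b c) x = (if x \<le> c then Scan b x else if b < c then Scan c x else Scan_Dead)"
| "scan_step Scan_Dead x = Scan_Dead"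

fun scan_accepts :: "scan_state \<Rightarrow> bool" where
  "scan_accepts Scan_Start \<longleftrightarrow> True"
| "scan_accepts (Scan b c) \<longleftrightarrow> b < c"
| "scan_accepts Scan_Dead \<longleftrightarrow> False"

lemma foldl_scan_step_Dead [simp]: "foldl scan_step Scan_Dead u = Scan_Dead"
  by (induction u) auto

lemma scan_accepts_foldl_Scan: "scan_accepts (foldl scan_step (Scan b c) u) \<longleftrightarrow> is_reading b (c # u)"
  by (induction u arbitrary: b c)
    (auto simp: is_reading_singleton is_reading_Cons_Cons_le is_reading_Cons_Cons_gt)

lemma scan_accepts_foldl_Start: "scan_accepts (foldl scan_step Scan_Start u) \<longleftrightarrow> is_reading 0 u"
  by (cases u) (simp_all add: scan_accepts_foldl_Scan)

lemma regular_Lrps: "regular_lang {1..n} (Lrps n)"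
proof (rule regular_langI[where S = "{Scan_Dead, Scan_Start} \<union> case_prod Scan ` ({..n} \<times> {..n})"
      and d = scan_step and start = Scan_Start and acc = scan_accepts])
  show "scan_step s x \<in> {Scan_Dead, Scan_Start} \<union> case_prod Scan ` ({..n} \<times> {..n})"
    if "s \<in> {Scan_Dead, Scan_Start} \<union> case_prod Scan ` ({..n} \<times> {..n})" "x \<in> {1..n}" for s x
    using that by (fastforce simp: image_iff split: if_splits)
  show "Lrps n = {w \<in> lists {1..n}. scan_accepts (foldl scan_step Scan_Start w)}"
    unfolding Lrps_eq scan_accepts_foldl_Start by auto
qed auto

lemma regular_L_right_Nil:
  "regular_lang (insert None (Some ` {1..n}) \<times> insert None (Some ` {1..n}))
     ((\<lambda>(u, v). deltaR u v) ` L_right rps_eq (Lrps n) [])"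
proof -
  have "(\<lambda>(u, v). deltaR u v) ` L_right rps_eq (Lrps n) [] = (\<lambda>u. deltaR u u) ` Lrps n"
    unfolding L_right_Nil by auto
  then show ?thesis
    using regular_lang_deltaR_diag[OF regular_Lrps] by simp
qed

text \<open>In \<open>Copy b c\<close> and \<open>Shift b c\<close> the pair \<open>(b, c)\<close> is the scanner state on the first tape.
  In \<open>Shift b c\<close> the letter \<open>a\<close> has been inserted, so the second tape lags one letter behind
  and must show \<open>c\<close> next.\<close>

datatype ins_state = Ins_Dead | Ins_Start | Ins_Done | Copy nat nat | Shift nat nat

fun ins_step :: "nat \<Rightarrow> ins_state \<Rightarrow> nat option \<times> nat option \<Rightarrow> ins_state" where
  "ins_step a Ins_Start (Some x, Some y) = (if y = x then Copy 0 x else Ins_Dead)"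
| "ins_step a Ins_Start (None, Some y) = (if y = a then Ins_Done else Ins_Dead)"
| "ins_step a (Copy b c) (Some x, Some y) =
     (if c < x \<and> a \<le> c then (if y = a \<and> b < c then Shift c x else Ins_Dead)
      else if y = x then (if x \<le> c then Copy b x else if b < c then Copy c x else Ins_Dead)
      else Ins_Dead)"
| "ins_step a (Copy b c) (None, Some y) = (if y = a \<and> b < c then Ins_Done else Ins_Dead)"
| "ins_step a (Shift b c) (Some x, Some y) =
     (if y = c then (if x \<le> c then Shift b x else if b < c then Shift c x else Ins_Dead) else Ins_Dead)"
| "ins_step a (Shift b c) (None, Some y) = (if y = c \<and> b < c then Ins_Done else Ins_Dead)"
| "ins_step a _ _ = Ins_Dead"

lemma foldl_ins_step_Dead [simp]: "foldl (ins_step a) Ins_Dead w = Ins_Dead"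
  by (induction w) auto

lemma foldl_ins_step_Done [simp]: "foldl (ins_step a) Ins_Done w = Ins_Done \<longleftrightarrow> w = []"
  by (cases w) auto

lemma ex_Cons_eq_deltaR_Cons:
  "(\<exists>u. P u \<and> z # w = deltaR u (c # u)) \<longleftrightarrow>
     z = (None, Some c) \<and> w = [] \<and> P [] \<or>
     (\<exists>x u. z = (Some x, Some c) \<and> w = deltaR u (x # u) \<and> P (x # u))"
  (is "?L \<longleftrightarrow> ?R")
proof
  assume ?L
  then obtain u where "P u" "z # w = deltaR u (c # u)"
    by blast
  then show ?R
    by (cases u) auto
next
  assume ?R
  then show ?L
  proof (elim disjE exE conjE)
    assume "z = (None, Some c)" "w = []" "P []"
    then show ?L by (intro exI[of _ "[]"]) simp
  next
    fix x u
    assume "z = (Some x, Some c)" "w = deltaR u (x # u)" "P (x # u)"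
    then show ?L by (intro exI[of _ "x # u"]) simp
  qed
qed

lemma ex_Cons_eq_deltaR_insert_after:
  "(\<exists>u. P u \<and> z # w = deltaR u (insert_after a c u)) \<longleftrightarrow>
     z = (None, Some a) \<and> w = [] \<and> P [] \<or>
     (\<exists>x u. c < x \<and> a \<le> c \<and> z = (Some x, Some a) \<and> w = deltaR u (x # u) \<and> P (x # u)) \<or>
     (\<exists>x u. \<not> (c < x \<and> a \<le> c) \<and> z = (Some x, Some x) \<and> w = deltaR u (insert_after a x u) \<and> P (x # u))"
  (is "?L \<longleftrightarrow> ?R")
proof
  assume ?L
  then obtain u where "P u" "z # w = deltaR u (insert_after a c u)"
    by blast
  then show ?R
    by (cases u) (auto split: if_splits)
next
  assume ?R
  then show ?L
  proof (elim disjE exE conjE)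
    assume "z = (None, Some a)" "w = []" "P []"
    then show ?L by (intro exI[of _ "[]"]) simp
  next
    fix x u
    assume "c < x" "a \<le> c" "z = (Some x, Some a)" "w = deltaR u (x # u)" "P (x # u)"
    then show ?L by (intro exI[of _ "x # u"]) simp
  next
    fix x u
    assume "\<not> (c < x \<and> a \<le> c)" "z = (Some x, Some x)" "w = deltaR u (insert_after a x u)" "P (x # u)"
    then show ?L by (intro exI[of _ "x # u"]) simp
  qed
qed

lemma foldl_ins_step_Shift:
  "foldl (ins_step a) (Shift b c) w = Ins_Done \<longleftrightarrow> (\<exists>u. is_reading b (c # u) \<and> w = deltaR u (c # u))"
proof (induction w arbitrary: b c)
  case (Cons z w)
  obtain p q where "z = (p, q)" by (cases z)
  then show ?case
    unfolding ex_Cons_eq_deltaR_Cons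
    by (cases p; cases q)
      (auto simp: Cons.IH is_reading_singleton is_reading_Cons_Cons_le is_reading_Cons_Cons_gt)
qed simp

lemma foldl_ins_step_Copy:
  "foldl (ins_step a) (Copy b c) w = Ins_Done \<longleftrightarrow>
     (\<exists>u. is_reading b (c # u) \<and> w = deltaR u (insert_after a c u))"
proof (induction w arbitrary: b c)
  case (Cons z w)
  obtain p q where "z = (p, q)" by (cases z)
  then show ?case
    \<comment> \<open>the IH is passed as a premise so that it survives the substitution of \<open>w\<close>\<close>
    unfolding ex_Cons_eq_deltaR_insert_after using Cons.IH
    by (cases p; cases q)
      (auto simp: foldl_ins_step_Shift is_reading_singleton is_reading_Cons_Cons_le is_reading_Cons_Cons_gt)
qed simp

lemma foldl_ins_step_Start:
  "foldl (ins_step a) Ins_Start w = Ins_Done \<longleftrightarrow> (\<exists>u. is_reading 0 u \<and> w = deltaR u (insert_reading a u))"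
proof (cases w)
  case (Cons z w')
  obtain p q where "z = (p, q)" by (cases z)
  moreover have "z # w' = deltaR u (insert_reading a u) \<longleftrightarrow>
      u = [] \<and> z = (None, Some a) \<and> w' = [] \<or>
      (\<exists>x u'. u = x # u' \<and> z = (Some x, Some x) \<and> w' = deltaR u' (insert_after a x u'))" for u
    by (cases u) auto
  ultimately show ?thesis
    using Cons by (cases p; cases q) (auto simp: foldl_ins_step_Copy)
qed simp

lemma regular_L_right_letter:
  assumes "a \<in> {1..n}"
  shows "regular_lang (insert None (Some ` {1..n}) \<times> insert None (Some ` {1..n}))
     ((\<lambda>(u, v). deltaR u v) ` L_right rps_eq (Lrps n) [a])"
proof (rule regular_langI[where
      S = "{Ins_Dead, Ins_Start, Ins_Done} \<union> case_prod Copy ` ({..n} \<times> {..n}) \<union> case_prod Shift ` ({..n} \<times> {..n})"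
      and d = "ins_step a" and start = Ins_Start and acc = "\<lambda>s. s = Ins_Done"])
  show "ins_step a s z \<in> {Ins_Dead, Ins_Start, Ins_Done} \<union> case_prod Copy ` ({..n} \<times> {..n}) \<union> case_prod Shift ` ({..n} \<times> {..n})"
    if "s \<in> {Ins_Dead, Ins_Start, Ins_Done} \<union> case_prod Copy ` ({..n} \<times> {..n}) \<union> case_prod Shift ` ({..n} \<times> {..n})"
      and "z \<in> insert None (Some ` {1..n}) \<times> insert None (Some ` {1..n})" for s z
    using that by (cases "(a, s, z)" rule: ins_step.cases) (fastforce simp: image_iff split: if_splits)+
  have "u \<in> Lrps n \<longleftrightarrow> deltaR u (insert_reading a u) \<in> lists (insert None (Some ` {1..n}) \<times> insert None (Some ` {1..n}))
      \<and> is_reading 0 u" for u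
    using assms unfolding Lrps_eq deltaR_in_lists by (auto simp: set_insert_reading)
  then show "(\<lambda>(u, v). deltaR u v) ` L_right rps_eq (Lrps n) [a] =
      {w \<in> lists (insert None (Some ` {1..n}) \<times> insert None (Some ` {1..n})). foldl (ins_step a) Ins_Start w = Ins_Done}"
    unfolding L_right_letter[OF assms] foldl_ins_step_Start by auto
qed auto

theorem theorem6p3:
  fixes n :: nat
  shows "automatic_structure (alphA n) rps_eq (Lrps n)"
  unfolding automatic_structure_def
proof (intro conjI ballI)
  show "finite {1..n}" by simp
  show "Lrps n \<subseteq> lists {1..n}"
    unfolding Lrps_eq by auto
  show "regular_lang {1..n} (Lrps n)"
    by (rule regular_Lrps)
  show "\<exists>u\<in>Lrps n. rps_eq u w" if "w \<in> lists {1..n}" for w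
    using ex_reading_rR_eq[OF that] unfolding Lrps_eq rps_eq_def by auto
  show "regular_lang (insert None (Some ` {1..n}) \<times> insert None (Some ` {1..n}))
      ((\<lambda>(u, v). deltaR u v) ` L_right rps_eq (Lrps n) a)"
    if "a \<in> insert [] ((\<lambda>x. [x]) ` {1..n})" for a
    using that regular_L_right_Nil regular_L_right_letter by auto
qed

end
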